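(* Let $\mathcal O$ be the suboperad of $\mathrm{CNCB}$ generated by $p:=T_{bbu}$ and $c:=T_{buu}$. Then $\mathcal O$ admits the presentation with generators $p,c$ of arity $2$ and relations $$(c\circ_2 p)\circ_2 c=(c\circ_1 c)\circ_2 p,\qquad (p\circ_2 p)\circ_2 c=(p\circ_1 c)\circ_2 p.$$ That is, $\mathcal O$ is isomorphic, via the morphism sending the generators to $p$ and $c$, to the quotient of the free operad on two binary generators by the operadic congruence generated by these two relations.
   Context: For $n\ge2$, a bicoloured noncrossing configuration (BNC) of size $n$ is a regular polygon with vertices $1,\dots,n+1$ clockwise, together with disjoint sets of blue and red arcs among the arcs $(i,j)$, $1\le i<j\le n+1$. The arcs $(i,i+1)$ are the edges ($i$th edge), $(1,n+1)$ is the base, and the others are diagonals. Coloured arcs are pairwise noncrossing ($(i,j),(k,l)$ cross iff $i<k<j<l$ or $k<i<l<j$), and red arcs are diagonals. There is one BNC of size $1$, a blue segment, which is the unit. The operad $\mathrm{CNCB}$ has the BNCs as elements (arity = size). Its composition $\mathfrak C\circ_i\mathfrak D$ ($\mathfrak C$ of size $n$, $\mathfrak D$ of size $m$) glues the base of $\mathfrak D$ on the $i$th edge of $\mathfrak C$. Arcs $(a,b)$ of $\mathfrak C$ become $(\sigma(a),\sigma(b))$ with $\sigma(v)=v$ for $v\le i$ and $v+m-1$ otherwise, and arcs $(a,b)$ of $\mathfrak D$ become $(a+i-1,b+i-1)$, keeping colours. The exception is the arc $(i,i+m)$, which is red if the $i$th edge of $\mathfrak C$ and the base of $\mathfrak D$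 are both uncoloured, blue if both are blue, and uncoloured otherwise. For $x,y,z\in\{b,u\}$, $T_{xyz}$ denotes the BNC of size $2$ (a triangle with vertices $1,2,3$) whose first edge $(1,2)$ has colour $x$, whose base $(1,3)$ has colour $y$, and whose second edge $(2,3)$ has colour $z$, where $b$ = blue and $u$ = uncoloured. The suboperad generated by a set is the smallest suboperad containing it. *)

theory Defs
  imports Main
begin

text \<open>A BNC is encoded as a triple (n, B, R): its size n, its set B of blue arcs
and its set R of red arcs. Arcs are pairs (i,j) with 1 <= i < j <= n+1.\<close>

type_synonym arc = "nat \<times> nat"
type_synonym bnc = "nat \<times> arc set \<times> arc set"

definition bnc_size :: "bnc \<Rightarrow> nat" where "bnc_size x = fst x"
definition blue :: "bnc \<Rightarrow> arc set" where "blue x = fst (snd x)"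
definition red :: "bnc \<Rightarrow> arc set" where "red x = snd (snd x)"

definition is_arc :: "nat \<Rightarrow> arc \<Rightarrow> bool" where
  "is_arc n a \<longleftrightarrow> 1 \<le> fst a \<and> fst a < snd a \<and> snd a \<le> n + 1"

definition crossing :: "arc \<Rightarrow> arc \<Rightarrow> bool" where
  "crossing a b \<longleftrightarrow> (case a of (i,j) \<Rightarrow> case b of (k,l) \<Rightarrow>
      (i < k \<and> k < j \<and> j < l) \<or> (k < i \<and> i < l \<and> l < j))"

definition is_diagonal :: "nat \<Rightarrow> arc \<Rightarrow> bool" where
  "is_diagonal n a \<longleftrightarrow> is_arc n a \<and> snd a \<noteq> fst a + 1 \<and> a \<noteq> (1, n + 1)"

text \<open>The elements of CNCB (not needed for the statement, recorded for documentation).\<close>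
definition is_bnc :: "bnc \<Rightarrow> bool" where
  "is_bnc x \<longleftrightarrow> bnc_size x \<ge> 1 \<and>
     (bnc_size x = 1 \<longrightarrow> x = (1, {(1,2)}, {})) \<and>
     (\<forall>a\<in>blue x \<union> red x. is_arc (bnc_size x) a) \<and>
     blue x \<inter> red x = {} \<and>
     (\<forall>a\<in>red x. is_diagonal (bnc_size x) a) \<and>
     (\<forall>a\<in>blue x \<union> red x. \<forall>b\<in>blue x \<union> red x. \<not> crossing a b)"

definition bnc_unit :: bnc where "bnc_unit = (1, {(1,2)}, {})"

text \<open>Partial composition C o_i D (glue the base of D on the i-th edge of C).\<close>
definition bnc_comp :: "bnc \<Rightarrow> nat \<Rightarrow> bnc \<Rightarrow> bnc" where
  "bnc_comp C i D =
    (let n = bnc_size C; m = bnc_size D;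
         \<sigma> = (\<lambda>v. if v \<le> i then v else v + m - 1);
         \<sigma>a = (\<lambda>(a,b). (\<sigma> a, \<sigma> b));
         sh = (\<lambda>(a,b). (a + i - 1, b + i - 1));
         e = (i, i + m);
         eC = (i, i + 1); bD = (1, m + 1);
         Bn = ((\<sigma>a ` blue C \<union> sh ` blue D) - {e}) \<union>
              (if eC \<in> blue C \<and> bD \<in> blue D then {e} else {});
         Rn = ((\<sigma>a ` red C \<union> sh ` red D) - {e}) \<union>
              (if eC \<notin> blue C \<union> red C \<and> bD \<notin> blue D \<union> red D then {e} else {})
     in (n + m - 1, Bn, Rn))"

text \<open>T_xyz: first edge (1,2) colour x, base (1,3) colour y, second edge (2,3) colour z.\<close>
definition gen_p :: bnc where "gen_p = (2, {(1,2), (1,3)}, {})"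
definition gen_c :: bnc where "gen_c = (2, {(1,2)}, {})"

inductive_set generated_O :: "bnc set" where
  unit: "bnc_unit \<in> generated_O"
| p: "gen_p \<in> generated_O"
| c: "gen_c \<in> generated_O"
| comp: "x \<in> generated_O \<Longrightarrow> y \<in> generated_O \<Longrightarrow> 1 \<le> i \<Longrightarrow> i \<le> bnc_size x
          \<Longrightarrow> bnc_comp x i y \<in> generated_O"

datatype gen = P | C

datatype ftree = Leaf | Node gen ftree ftree

fun arity :: "ftree \<Rightarrow> nat" where
  "arity Leaf = 1"
| "arity (Node g l r) = arity l + arity r"

fun graft :: "ftree \<Rightarrow> nat \<Rightarrow> ftree \<Rightarrow> ftree" where
  "graft Leaf i s = (if i = 1 then s else Leaf)"
| "graft (Node g l r) i s =
     (if i \<le> arity l then Node g (graft l i s) r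
      else Node g l (graft r (i - arity l) s))"

definition tp :: ftree where "tp = Node P Leaf Leaf"
definition tc :: ftree where "tc = Node C Leaf Leaf"

inductive base_rel :: "ftree \<Rightarrow> ftree \<Rightarrow> bool" where
  r1: "base_rel (graft (graft tc 2 tp) 2 tc) (graft (graft tc 1 tc) 2 tp)"
| r2: "base_rel (graft (graft tp 2 tp) 2 tc) (graft (graft tp 1 tc) 2 tp)"

inductive fcong :: "ftree \<Rightarrow> ftree \<Rightarrow> bool" where
  base: "base_rel t t' \<Longrightarrow> fcong t t'"
| refl: "fcong t t"
| sym: "fcong t t' \<Longrightarrow> fcong t' t"
| trans: "fcong t t' \<Longrightarrow> fcong t' t'' \<Longrightarrow> fcong t t''"
| comp: "fcong t t' \<Longrightarrow> fcong s s' \<Longrightarrow> 1 \<le> i \<Longrightarrow> i \<le> arity t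
          \<Longrightarrow> fcong (graft t i s) (graft t' i s')"

fun gen_val :: "gen \<Rightarrow> bnc" where
  "gen_val P = gen_p"
| "gen_val C = gen_c"

fun eval :: "ftree \<Rightarrow> bnc" where
  "eval Leaf = bnc_unit"
| "eval (Node g l r) = bnc_comp (bnc_comp (gen_val g) 2 (eval r)) 1 (eval l)"

end

theory Submission
  imports Defs
begin

text \<open>
  The BNC of a tree can be described directly: reading the tree recursively, every leaf and
  every internal node contributes the arc spanned by its leaves, coloured according to the gluing
  rule from the colour of the edge it is glued on (blue for a left child, uncoloured for a right
  child) and the colour of its own base (blue for a leaf or a \<open>p\<close>, uncoloured for a \<open>c\<close>). This
  description commutes with grafting, so \<open>eval\<close> is an operad morphism onto the suboperad
  generated by \<open>p\<close> and \<open>c\<close>, and it is constant on congruence classes.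

  Both relations have the shape \<open>g(x, p(c(y, z), w)) = g(c(x, p(y, z)), w)\<close>. Oriented from left
  to right they terminate, so every tree is congruent to a normal one, in which no right child is
  of the form \<open>p(c(_, _), _)\<close>. A normal tree is determined by its BNC: if its vertices are
  \<open>k, \<dots>, k + n\<close>, then \<open>k + arity l\<close>, for \<open>l\<close> the left subtree, is the largest \<open>K\<close> such that no
  coloured arc crosses \<open>(k, K)\<close> and every blue arc ending in \<open>K\<close> starts at or before \<open>k\<close>;
  the root colour and both subtrees are then read off recursively.
\<close>

section \<open>The arcs of the configuration of a tree\<close>

lemma one_le_arity: "1 \<le> arity t"
  by (induction t) auto

lemma arity_graft: "1 \<le> i \<Longrightarrow> i \<le> arity t \<Longrightarrow> arity (graft t i s) = arity t + arity s - 1"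
  using one_le_arity[of s] by (induction t arbitrary: i) auto

datatype colour = Blue | Red

definition glue_colour :: "bool \<Rightarrow> bool \<Rightarrow> colour option" where
  "glue_colour edge_blue base_blue =
     (if edge_blue \<and> base_blue then Some Blue
      else if \<not> edge_blue \<and> \<not> base_blue then Some Red else None)"

fun base_blue :: "ftree \<Rightarrow> bool" where
  "base_blue (Node g l r) \<longleftrightarrow> g = P"
| "base_blue Leaf \<longleftrightarrow> True"

text \<open>\<open>arcs col t k e\<close> is the set of arcs of colour \<open>col\<close> of the configuration of \<open>t\<close>, drawn on the
  vertices \<open>k, \<dots>, k + arity t\<close> and glued on an edge that is blue if \<open>e\<close> and uncoloured otherwise;
  the arc \<open>(k, k + arity t)\<close> is that edge.\<close>
fun arcs :: "colour \<Rightarrow> ftree \<Rightarrow> nat \<Rightarrow> bool \<Rightarrow> arc set" where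
  "arcs col Leaf k e = (if glue_colour e True = Some col then {(k, k + 1)} else {})"
| "arcs col (Node g l r) k e = arcs col l k True \<union> arcs col r (k + arity l) False \<union>
     (if glue_colour e (g = P) = Some col then {(k, k + arity l + arity r)} else {})"

lemma arcs_bounds: "(x, y) \<in> arcs col t k e \<Longrightarrow> k \<le> x \<and> x < y \<and> y \<le> k + arity t"
proof (induction t arbitrary: k e)
  case (Node g l r)
  with one_le_arity[of l] one_le_arity[of r] show ?case
    by (fastforce split: if_splits)
qed (simp split: if_splits)

lemma base_arc_in_arcs:
  "(k, k + arity t) \<in> arcs col t k e \<longleftrightarrow> glue_colour e (base_blue t) = Some col"
proof (cases t)
  case (Node g l r)
  with arcs_bounds[of k "k + arity t" col l k True] arcs_bounds[of k "k + arity t" col r "k + arity l" False]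
    one_le_arity[of l] one_le_arity[of r] show ?thesis
    by auto
qed simp

lemma arcs_change_slot:
  "arcs col t k e' = (arcs col t k e - {(k, k + arity t)}) \<union>
     (if glue_colour e' (base_blue t) = Some col then {(k, k + arity t)} else {})"
proof (cases t)
  case (Node g l r)
  with arcs_bounds[of k "k + arity t" col l k True] arcs_bounds[of k "k + arity t" col r "k + arity l" False]
    one_le_arity[of l] one_le_arity[of r] show ?thesis
    by auto
qed auto

lemma edge_notin_red_arcs: "(x, Suc x) \<notin> arcs Red t k e"
proof (induction t arbitrary: k e)
  case (Node g l r)
  with one_le_arity[of l] one_le_arity[of r] show ?case
    by auto
qed (simp add: glue_colour_def)

definition shift_arc :: "nat \<Rightarrow> arc \<Rightarrow> arc" where
  "shift_arc d = (\<lambda>(x, y). (x + d, y + d))"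

lemma shift_arc_image_arcs: "shift_arc d ` arcs col t k e = arcs col t (k + d) e"
  by (induction t arbitrary: k e) (auto simp: shift_arc_def image_Un algebra_simps)

text \<open>The relabelling \<open>\<sigma>\<close> of the vertices of \<open>C\<close> in \<open>bnc_comp C c D\<close>, where \<open>D\<close> has size \<open>m\<close>.\<close>
definition stretch :: "nat \<Rightarrow> nat \<Rightarrow> nat \<Rightarrow> nat" where
  "stretch c m v = (if v \<le> c then v else v + m - 1)"

definition stretch_arc :: "nat \<Rightarrow> nat \<Rightarrow> arc \<Rightarrow> arc" where
  "stretch_arc c m = (\<lambda>(x, y). (stretch c m x, stretch c m y))"

lemma stretch_arc_below: "\<forall>(x, y) \<in> A. x < y \<and> y \<le> c \<Longrightarrow> stretch_arc c m ` A = A"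
  by (rule HOL.trans[OF image_cong image_ident]) (auto simp: stretch_arc_def stretch_def)

lemma stretch_arc_above:
  "\<forall>(x, y) \<in> A. c < x \<and> x < y \<Longrightarrow> 1 \<le> m \<Longrightarrow> stretch_arc c m ` A = shift_arc (m - 1) ` A"
  by (rule image_cong) (auto simp: stretch_arc_def stretch_def shift_arc_def)

text \<open>The arcs that the composition rule of \<open>bnc_comp\<close> produces from \<open>t\<close> and \<open>s\<close>.\<close>
definition graft_arcs :: "colour \<Rightarrow> ftree \<Rightarrow> nat \<Rightarrow> ftree \<Rightarrow> nat \<Rightarrow> bool \<Rightarrow> arc set" where
  "graft_arcs col t i s k e =
     (stretch_arc (k + i - 1) (arity s) ` arcs col t k e - {(k + i - 1, k + i - 1 + arity s)})
     \<union> arcs col s (k + i - 1) ((k + i - 1, k + i) \<in> arcs Blue t k e)"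

lemma arcs_graft_Node_left:
  assumes i: "1 \<le> i" "i \<le> arity l"
    and IH: "arcs col (graft l i s) k True = graft_arcs col l i s k True"
  shows "arcs col (graft (Node g l r) i s) k e = graft_arcs col (Node g l r) i s k e"
proof -
  define a b m where "a = arity l" and "b = arity r" and "m = arity s"
  have pos: "1 \<le> a" "1 \<le> b" "1 \<le> m"
    using one_le_arity a_def b_def m_def by auto
  let ?j = "k + i - 1" and ?E = "{(k + i - 1, k + i - 1 + m)}"
  let ?base = "\<lambda>y. if glue_colour e (g = P) = Some col then {(k, y)} else {}"
  have r_above: "\<forall>(x, y) \<in> arcs c r (k + a) False. ?j < x \<and> x < y" for c
    using arcs_bounds[of _ _ c r "k + a" False] i a_def by fastforce
  have "stretch_arc ?j m ` arcs col r (k + a) False = arcs col r (k + (a + m - 1)) False"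
    using stretch_arc_above[OF r_above pos(3)] shift_arc_image_arcs pos by (simp add: algebra_simps)
  moreover have "(?j, y) \<notin> arcs col r (k + (a + m - 1)) False" for y
    using arcs_bounds[of ?j y col r "k + (a + m - 1)" False] i pos a_def by auto
  ultimately have r: "stretch_arc ?j m ` arcs col r (k + a) False - ?E = arcs col r (k + (a + m - 1)) False"
    by auto
  have base: "stretch_arc ?j m ` ?base (k + a + b) - ?E = ?base (k + a + b + (m - 1))"
    using i pos by (auto simp: stretch_arc_def stretch_def a_def)
  have node: "arcs col (Node g l r) k e = arcs col l k True \<union> arcs col r (k + a) False \<union> ?base (k + a + b)"
    by (simp add: a_def b_def)
  have slot: "(?j, k + i) \<in> arcs Blue (Node g l r) k e \<longleftrightarrow> (?j, k + i) \<in> arcs Blue l k True"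
    using r_above[of Blue] i pos by (auto simp: a_def b_def)
  have "arity (graft l i s) = a + m - 1"
    using arity_graft[OF i] a_def m_def by simp
  moreover have "graft (Node g l r) i s = Node g (graft l i s) r"
    using i a_def by simp
  ultimately have "arcs col (graft (Node g l r) i s) k e =
      arcs col (graft l i s) k True \<union> arcs col r (k + (a + m - 1)) False \<union> ?base (k + a + b + (m - 1))"
    using pos by (simp add: a_def b_def algebra_simps)
  also have "\<dots> = (stretch_arc ?j m ` arcs col l k True - ?E) \<union> arcs col s ?j ((?j, k + i) \<in> arcs Blue l k True)
      \<union> (stretch_arc ?j m ` arcs col r (k + a) False - ?E) \<union> (stretch_arc ?j m ` ?base (k + a + b) - ?E)"
    using IH r base by (simp add: graft_arcs_def m_def)
  finally show ?thesis
    by (simp only: graft_arcs_def slot node image_Un Un_Diff m_def; blast)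
qed

lemma arcs_graft_Node_right:
  assumes i: "arity l < i" "i \<le> arity l + arity r"
    and IH: "arcs col (graft r (i - arity l) s) (k + arity l) False = graft_arcs col r (i - arity l) s (k + arity l) False"
  shows "arcs col (graft (Node g l r) i s) k e = graft_arcs col (Node g l r) i s k e"
proof -
  define a b m where "a = arity l" and "b = arity r" and "m = arity s"
  have pos: "1 \<le> a" "1 \<le> b" "1 \<le> m"
    using one_le_arity a_def b_def m_def by auto
  let ?j = "k + i - 1" and ?E = "{(k + i - 1, k + i - 1 + m)}"
  let ?base = "\<lambda>y. if glue_colour e (g = P) = Some col then {(k, y)} else {}"
  have l_below: "\<forall>(x, y) \<in> arcs c l k True. x < y \<and> y \<le> ?j" for c
    using arcs_bounds[of _ _ c l k True] i a_def by fastforce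
  have l: "stretch_arc ?j m ` arcs col l k True - ?E = arcs col l k True"
    using stretch_arc_below[OF l_below[of col]] l_below[of col] pos by auto
  have base: "stretch_arc ?j m ` ?base (k + a + b) - ?E = ?base (k + a + (b + m - 1))"
    using i pos by (auto simp: stretch_arc_def stretch_def a_def b_def)
  have node: "arcs col (Node g l r) k e = arcs col l k True \<union> arcs col r (k + a) False \<union> ?base (k + a + b)"
    by (simp add: a_def b_def)
  have slot: "(?j, k + i) \<in> arcs Blue (Node g l r) k e \<longleftrightarrow> (?j, k + i) \<in> arcs Blue r (k + a) False"
    using arcs_bounds[of ?j "k + i" Blue l k True] i pos by (auto simp: a_def b_def)
  have idx: "k + a + (i - a) - 1 = ?j" "k + a + (i - a) = k + i"
    using i a_def by auto
  have "arity (graft r (i - a) s) = b + m - 1"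
    using arity_graft[of "i - a" r s] i a_def b_def m_def by simp
  moreover have "graft (Node g l r) i s = Node g l (graft r (i - a) s)"
    using i a_def by simp
  ultimately have "arcs col (graft (Node g l r) i s) k e =
      arcs col l k True \<union> arcs col (graft r (i - a) s) (k + a) False \<union> ?base (k + a + (b + m - 1))"
    by (simp add: a_def b_def)
  also have "\<dots> = (stretch_arc ?j m ` arcs col l k True - ?E)
      \<union> (stretch_arc ?j m ` arcs col r (k + a) False - ?E) \<union> arcs col s ?j ((?j, k + i) \<in> arcs Blue r (k + a) False)
      \<union> (stretch_arc ?j m ` ?base (k + a + b) - ?E)"
    using IH l base idx by (simp add: graft_arcs_def a_def m_def Un_assoc)
  finally show ?thesis
    by (simp only: graft_arcs_def slot node image_Un Un_Diff m_def; blast)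
qed

lemma arcs_graft:
  "1 \<le> i \<Longrightarrow> i \<le> arity t \<Longrightarrow> arcs col (graft t i s) k e = graft_arcs col t i s k e"
proof (induction t arbitrary: i k e)
  case Leaf
  then show ?case
    using one_le_arity[of s] by (auto simp: graft_arcs_def stretch_arc_def stretch_def glue_colour_def)
next
  case (Node g l r)
  then show ?case
    using arcs_graft_Node_left[OF _ _ Node.IH(1)] arcs_graft_Node_right[OF _ _ Node.IH(2)]
    by (cases "i \<le> arity l") auto
qed

section \<open>Evaluation\<close>

definition bnc_of_tree :: "ftree \<Rightarrow> bnc" where
  "bnc_of_tree t = (arity t, arcs Blue t 1 True, arcs Red t 1 True)"

lemma bnc_comp_triple:
  assumes "1 \<le> i"
  shows "bnc_comp (n, B, R) i (m, B', R') = (n + m - 1,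
     ((stretch_arc i m ` B \<union> shift_arc (i - 1) ` B') - {(i, i + m)}) \<union>
       (if (i, i + 1) \<in> B \<and> (1, m + 1) \<in> B' then {(i, i + m)} else {}),
     ((stretch_arc i m ` R \<union> shift_arc (i - 1) ` R') - {(i, i + m)}) \<union>
       (if (i, i + 1) \<notin> B \<union> R \<and> (1, m + 1) \<notin> B' \<union> R' then {(i, i + m)} else {}))"
proof -
  have "(\<lambda>(a, b). (a + i - 1, b + i - 1)) = shift_arc (i - 1)"
    using assms by (auto simp: shift_arc_def)
  then show ?thesis
    by (simp add: bnc_comp_def Let_def bnc_size_def blue_def red_def stretch_arc_def stretch_def)
qed

lemma bnc_comp_bnc_of_tree:
  assumes "1 \<le> i" "i \<le> arity t"
  shows "bnc_comp (bnc_of_tree t) i (bnc_of_tree s) = bnc_of_tree (graft t i s)"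
proof -
  define m where "m = arity s"
  define edge_blue where "edge_blue = ((i, i + 1) \<in> arcs Blue t 1 True)"
  have shift: "shift_arc (i - 1) ` arcs col s 1 True = arcs col s i True" for col
    using shift_arc_image_arcs[of "i - 1" col s 1 True] assms(1) by simp
  have graft: "arcs col (graft t i s) 1 True =
      (stretch_arc i m ` arcs col t 1 True - {(i, i + m)}) \<union> arcs col s i edge_blue" for col
    using arcs_graft[OF assms, of col s 1 True] by (simp add: graft_arcs_def m_def edge_blue_def)
  have reslot: "arcs col s i edge_blue = (arcs col s i True - {(i, i + m)}) \<union>
      (if glue_colour edge_blue (base_blue s) = Some col then {(i, i + m)} else {})" for col
    using arcs_change_slot[of col s i edge_blue True] m_def by simp
  have "(1, m + 1) \<in> arcs Blue s 1 True \<longleftrightarrow> base_blue s" "(1, m + 1) \<notin> arcs Red s 1 True"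
    using base_arc_in_arcs[of 1 s _ True] m_def by (simp_all add: add.commute glue_colour_def)
  moreover have "(i, i + 1) \<notin> arcs Red t 1 True"
    using edge_notin_red_arcs[of i t 1 True] by simp
  ultimately have blue: "((i, i + 1) \<in> arcs Blue t 1 True \<and> (1, m + 1) \<in> arcs Blue s 1 True)
        \<longleftrightarrow> glue_colour edge_blue (base_blue s) = Some Blue"
    and red: "((i, i + 1) \<notin> arcs Blue t 1 True \<union> arcs Red t 1 True \<and> (1, m + 1) \<notin> arcs Blue s 1 True \<union> arcs Red s 1 True)
        \<longleftrightarrow> glue_colour edge_blue (base_blue s) = Some Red"
    by (auto simp: glue_colour_def edge_blue_def)
  have "arity (graft t i s) = arity t + m - 1"
    using arity_graft[OF assms] m_def by simp
  then show ?thesis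
    unfolding bnc_of_tree_def bnc_comp_triple[OF assms(1)] shift graft reslot blue red m_def[symmetric]
    by (simp add: Un_Diff Un_assoc)
qed

lemma gen_val_eq_bnc_of_tree: "gen_val g = bnc_of_tree (Node g Leaf Leaf)"
  by (cases g) (auto simp: bnc_of_tree_def gen_p_def gen_c_def glue_colour_def)

lemma eval_eq_bnc_of_tree: "eval t = bnc_of_tree t"
proof (induction t)
  case Leaf
  show ?case
    by (simp add: bnc_of_tree_def bnc_unit_def glue_colour_def)
next
  case (Node g l r)
  have "eval (Node g l r) = bnc_comp (bnc_comp (bnc_of_tree (Node g Leaf Leaf)) 2 (bnc_of_tree r)) 1 (bnc_of_tree l)"
    using Node by (simp add: gen_val_eq_bnc_of_tree)
  also have "\<dots> = bnc_of_tree (graft (graft (Node g Leaf Leaf) 2 r) 1 l)"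
    using one_le_arity[of r] by (simp add: bnc_comp_bnc_of_tree)
  finally show ?case
    by simp
qed

lemma eval_graft:
  "1 \<le> i \<Longrightarrow> i \<le> arity t \<Longrightarrow> eval (graft t i s) = bnc_comp (eval t) i (eval s)"
  by (simp add: eval_eq_bnc_of_tree bnc_comp_bnc_of_tree)

lemma bnc_size_eval: "bnc_size (eval t) = arity t"
  by (simp add: eval_eq_bnc_of_tree bnc_of_tree_def bnc_size_def)

lemma fcong_imp_eval_eq: "fcong t t' \<Longrightarrow> eval t = eval t'"
proof (induction rule: fcong.induct)
  case (base t t')
  then show ?case
    by (cases rule: base_rel.cases) (auto simp: eval_eq_bnc_of_tree bnc_of_tree_def tp_def tc_def glue_colour_def)
next
  case (comp t t' s s' i)
  then have "arity t = arity t'"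
    by (metis bnc_size_eval)
  with comp show ?case
    by (simp add: eval_graft)
qed simp_all

lemma bnc_size_bnc_comp: "bnc_size (bnc_comp x i y) = bnc_size x + bnc_size y - 1"
  unfolding bnc_comp_def Let_def bnc_size_def by (simp only: fst_conv)

lemma gen_val_in_generated_O: "gen_val g \<in> generated_O"
  by (cases g) (simp_all add: generated_O.p generated_O.c)

lemma bnc_size_gen_val: "bnc_size (gen_val g) = 2"
  by (cases g) (simp_all add: bnc_size_def gen_p_def gen_c_def)

lemma eval_in_generated_O: "eval t \<in> generated_O"
proof (induction t)
  case Leaf
  show ?case
    by (simp add: generated_O.unit)
next
  case (Node g l r)
  have "bnc_comp (gen_val g) 2 (eval r) \<in> generated_O"
    using generated_O.comp[OF gen_val_in_generated_O Node.IH(2)] bnc_size_gen_val by simp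
  moreover have "1 \<le> bnc_size (bnc_comp (gen_val g) 2 (eval r))"
    using bnc_size_bnc_comp bnc_size_gen_val by simp
  ultimately show ?case
    using generated_O.comp[OF _ Node.IH(1), of _ 1] by simp
qed

lemma generated_O_subset_range_eval: "x \<in> generated_O \<Longrightarrow> x \<in> range eval"
proof (induction rule: generated_O.induct)
  case unit
  show ?case
    using eval.simps(1) by (metis rangeI)
next
  case p
  have "eval tp = gen_p"
    using gen_val_eq_bnc_of_tree[of P] by (simp add: tp_def eval_eq_bnc_of_tree)
  then show ?case
    by (metis rangeI)
next
  case c
  have "eval tc = gen_c"
    using gen_val_eq_bnc_of_tree[of C] by (simp add: tc_def eval_eq_bnc_of_tree)
  then show ?case
    by (metis rangeI)
next
  case (comp x y i)
  then obtain t s where "x = eval t" "y = eval s"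
    by auto
  with comp.hyps(3,4) have "bnc_comp x i y = eval (graft t i s)"
    by (simp add: eval_graft bnc_size_eval)
  then show ?case
    by (metis rangeI)
qed

section \<open>Normal forms\<close>

fun pc_rooted :: "ftree \<Rightarrow> bool" where
  "pc_rooted (Node P (Node C x y) z) \<longleftrightarrow> True"
| "pc_rooted t \<longleftrightarrow> False"

fun normal :: "ftree \<Rightarrow> bool" where
  "normal Leaf \<longleftrightarrow> True"
| "normal (Node g l r) \<longleftrightarrow> normal l \<and> normal r \<and> \<not> pc_rooted r"

lemma fcong_Node: "fcong l l' \<Longrightarrow> fcong r r' \<Longrightarrow> fcong (Node g l r) (Node g l' r')"
  using fcong.comp[OF fcong.comp[OF fcong.refl, of r r' 2 "Node g Leaf Leaf"], of l l' 1]
  by (simp add: one_le_arity)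

lemma fcong_rotate: "fcong (Node g x (Node P (Node C y z) w)) (Node g (Node C x (Node P y z)) w)"
proof -
  have rel: "fcong (Node g Leaf (Node P (Node C Leaf Leaf) Leaf)) (Node g (Node C Leaf (Node P Leaf Leaf)) Leaf)"
    using base_rel.r1 base_rel.r2 by (cases g) (auto simp: tp_def tc_def intro: fcong.base)
  have "fcong (graft (graft (graft (graft (Node g Leaf (Node P (Node C Leaf Leaf) Leaf)) 4 w) 3 z) 2 y) 1 x)
      (graft (graft (graft (graft (Node g (Node C Leaf (Node P Leaf Leaf)) Leaf) 4 w) 3 z) 2 y) 1 x)"
    by (intro fcong.comp fcong.refl rel) (simp_all add: one_le_arity)
  then show ?thesis
    by (simp add: one_le_arity)
qed

text \<open>Strictly decreased by the rotation of \<open>fcong_rotate\<close>.\<close>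
fun right_weight :: "ftree \<Rightarrow> nat" where
  "right_weight Leaf = 0"
| "right_weight (Node g l r) = right_weight l + right_weight r + arity r"

lemma pc_rootedE:
  assumes "pc_rooted r"
  obtains y z w where "r = Node P (Node C y z) w"
  using assms by (induction r rule: pc_rooted.induct) auto

lemma exists_normal_fcong:
  "\<exists>t'. fcong t t' \<and> normal t' \<and> right_weight t' \<le> right_weight t \<and> arity t' = arity t"
proof (induction "right_weight t" arbitrary: t rule: less_induct)
  case less
  show ?case
  proof (cases t)
    case Leaf
    then show ?thesis
      by (intro exI[of _ t]) (simp add: fcong.refl)
  next
    case (Node g l r)
    have "right_weight l < right_weight t"
      using Node one_le_arity[of r] by simp
    then obtain l' where l': "fcong l l'" "normal l'" "right_weight l' \<le> right_weight l" "arity l' = arity l"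
      using less(1) by blast
    have "right_weight r < right_weight t"
      using Node one_le_arity[of r] by simp
    then obtain r' where r': "fcong r r'" "normal r'" "right_weight r' \<le> right_weight r" "arity r' = arity r"
      using less(1) by blast
    have t1: "fcong t (Node g l' r')"
      unfolding Node by (rule fcong_Node[OF l'(1) r'(1)])
    have t1_weight: "right_weight (Node g l' r') \<le> right_weight t" "arity (Node g l' r') = arity t"
      using Node l'(3,4) r'(3,4) by simp_all
    show ?thesis
    proof (cases "pc_rooted r'")
      case False
      with t1 t1_weight l'(2) r'(2) show ?thesis
        by auto
    next
      case True
      then obtain y z w where r'_eq: "r' = Node P (Node C y z) w"
        by (rule pc_rootedE)
      let ?t2 = "Node g (Node C l' (Node P y z)) w"
      have "fcong t ?t2"
        using fcong.trans[OF t1[unfolded r'_eq] fcong_rotate] .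
      moreover have "right_weight ?t2 < right_weight t" "arity ?t2 = arity t"
        using t1_weight one_le_arity[of w] unfolding r'_eq by simp_all
      moreover obtain t3 where "fcong ?t2 t3" "normal t3" "right_weight t3 \<le> right_weight ?t2" "arity t3 = arity ?t2"
        using less(1)[OF \<open>right_weight ?t2 < right_weight t\<close>] by blast
      ultimately show ?thesis
        using fcong.trans by fastforce
    qed
  qed
qed

section \<open>Normal trees are determined by their evaluation\<close>

lemma pc_rooted_P: "pc_rooted (Node P u v) \<longleftrightarrow> \<not> base_blue u"
proof (cases u)
  case (Node h x y)
  then show ?thesis
    by (cases h) auto
qed simp

definition split_point :: "arc set \<Rightarrow> arc set \<Rightarrow> nat \<Rightarrow> nat \<Rightarrow> bool" where
  "split_point B R k K \<longleftrightarrow>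
     (\<forall>q \<in> B \<union> R. \<not> crossing q (k, K)) \<and> (\<forall>x. (x, K) \<in> B \<longrightarrow> x \<le> k)"

lemma blue_arc_to_end: "(x, k + arity t) \<in> arcs Blue t k e \<Longrightarrow> x = k \<and> e"
proof (induction t arbitrary: k e x)
  case (Node g l r)
  then show ?case
    using arcs_bounds[of x "k + arity l + arity r" Blue l k True] one_le_arity[of r]
      Node.IH(2)[of x "k + arity l" False]
    by (auto simp: add.assoc glue_colour_def split: if_splits)
qed (auto simp: glue_colour_def split: if_splits)

lemma arcs_left_subtree:
  "arcs col l k True = {q \<in> arcs col (Node g l r) k e. snd q \<le> k + arity l}"
  using arcs_bounds[of _ _ col l k True] arcs_bounds[of _ _ col r "k + arity l" False] one_le_arity[of r]
  by (fastforce split: if_splits)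

lemma arcs_right_subtree:
  "arcs col r (k + arity l) False = {q \<in> arcs col (Node g l r) k e. k + arity l \<le> fst q}"
  using arcs_bounds[of _ _ col l k True] arcs_bounds[of _ _ col r "k + arity l" False] one_le_arity[of l]
  by (fastforce split: if_splits)

lemma split_point_root:
  "split_point (arcs Blue (Node g l r) k e) (arcs Red (Node g l r) k e) k (k + arity l)"
proof -
  let ?K = "k + arity l"
  have "(k \<le> x \<and> y \<le> ?K) \<or> ?K \<le> x \<or> x = k"
    if "(x, y) \<in> arcs col (Node g l r) k e" for x y col
    using that arcs_bounds[of x y col l k True] arcs_bounds[of x y col r ?K False]
    by (auto split: if_splits)
  moreover have "x \<le> k" if "(x, ?K) \<in> arcs Blue (Node g l r) k e" for x
    using that blue_arc_to_end[of x k l True] arcs_bounds[of x ?K Blue r ?K False]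
    by (auto split: if_splits)
  ultimately show ?thesis
    unfolding split_point_def crossing_def by fastforce
qed

text \<open>Walking down the right spine of a normal tree: a red root arc would cross \<open>(k, K)\<close>, and
  the blue arc spanned by a left child (blue since the tree is not \<open>pc_rooted\<close>) either crosses
  \<open>(k, K)\<close>, ends at \<open>K\<close>, or ends before \<open>K\<close>, in which case we descend into the right child.\<close>
lemma no_split_point_in_spine:
  assumes "normal t" "\<not> pc_rooted t" "k < p" "p < K" "K < p + arity t"
    "arcs Blue t p False \<subseteq> B" "arcs Red t p False \<subseteq> R"
  shows "\<not> split_point B R k K"
  using assms
proof (induction t arbitrary: p)
  case (Node g u v)
  show ?case
  proof (cases g)
    case C
    then have "(p, p + arity (Node g u v)) \<in> R"
      using Node.prems(7) by (auto simp: add.assoc glue_colour_def)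
    then show ?thesis
      using Node.prems(3-5) by (auto simp: split_point_def crossing_def)
  next
    case P
    have "base_blue u"
      using Node.prems(2) P pc_rooted_P by simp
    then have blue: "(p, p + arity u) \<in> B"
      using base_arc_in_arcs[of p u Blue True] Node.prems(6) by (auto simp: glue_colour_def)
    show ?thesis
    proof
      assume split: "split_point B R k K"
      with blue have "\<not> crossing (p, p + arity u) (k, K)" "p + arity u = K \<longrightarrow> p \<le> k"
        by (auto simp: split_point_def)
      with Node.prems(3,4) have "p + arity u < K"
        by (auto simp: crossing_def)
      moreover have "arcs Blue v (p + arity u) False \<subseteq> B" "arcs Red v (p + arity u) False \<subseteq> R"
        using Node.prems(6,7) by auto
      ultimately show False
        using Node.IH(2)[of "p + arity u"] Node.prems(1,3,5) split by auto
    qed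
  qed
qed simp

lemma no_split_point_beyond_root:
  assumes "normal (Node g l r)" "k + arity l < K" "K < k + arity (Node g l r)"
  shows "\<not> split_point (arcs Blue (Node g l r) k e) (arcs Red (Node g l r) k e) k K"
proof (rule no_split_point_in_spine)
  show "normal r" "\<not> pc_rooted r"
    using assms(1) by simp_all
  show "k < k + arity l" "k + arity l < K" "K < k + arity l + arity r"
    using assms(2,3) one_le_arity[of l] by simp_all
qed auto

lemma left_arity_determined_by_arcs:
  assumes "normal (Node g l r)" "normal (Node g' l' r')" "arity (Node g l r) = arity (Node g' l' r')"
    "arcs Blue (Node g l r) k e = arcs Blue (Node g' l' r') k e"
    "arcs Red (Node g l r) k e = arcs Red (Node g' l' r') k e"
  shows "arity l = arity l'"
proof -
  have "\<not> arity l1 < arity l2"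
    if "normal (Node g1 l1 r1)" "arity (Node g1 l1 r1) = arity (Node g2 l2 r2)"
      "arcs Blue (Node g1 l1 r1) k e = arcs Blue (Node g2 l2 r2) k e"
      "arcs Red (Node g1 l1 r1) k e = arcs Red (Node g2 l2 r2) k e" for g1 l1 r1 g2 l2 r2
    using split_point_root[of g2 l2 r2 k e] no_split_point_beyond_root[OF that(1), of k "k + arity l2" e]
      that(2-4) one_le_arity[of r2] by auto
  then show ?thesis
    using assms by (metis linorder_neqE_nat)
qed

lemma base_blue_determined_by_arcs:
  assumes "arity t = arity t'" "arcs Blue t k e = arcs Blue t' k e" "arcs Red t k e = arcs Red t' k e"
  shows "base_blue t = base_blue t'"
proof -
  have "(k, k + arity t) \<in> arcs col t k e \<longleftrightarrow> (k, k + arity t') \<in> arcs col t' k e" for col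
    by (cases col) (simp_all only: assms)
  then have "glue_colour e (base_blue t) = Some col \<longleftrightarrow> glue_colour e (base_blue t') = Some col" for col
    unfolding base_arc_in_arcs .
  from this[of Blue] this[of Red] show ?thesis
    by (cases e) (auto simp: glue_colour_def split: if_splits)
qed

lemma normal_arcs_inj:
  assumes "normal t" "normal t'" "arity t = arity t'"
    "arcs Blue t k e = arcs Blue t' k e" "arcs Red t k e = arcs Red t' k e"
  shows "t = t'"
  using assms
proof (induction t arbitrary: t' k e)
  case Leaf
  show ?case
  proof (cases t')
    case (Node h x y)
    with Leaf.prems(3) one_le_arity[of x] one_le_arity[of y] show ?thesis
      by simp
  qed simp
next
  case (Node g l r)
  then obtain g' l' r' where t': "t' = Node g' l' r'"
    using one_le_arity[of l] one_le_arity[of r] by (cases t') auto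
  have l: "arity l = arity l'"
    using left_arity_determined_by_arcs Node.prems unfolding t' by blast
  then have r: "arity r = arity r'"
    using Node.prems(3) t' by simp
  have "base_blue (Node g l r) = base_blue t'"
    using base_blue_determined_by_arcs Node.prems(3-5) by blast
  then have "g = g'"
    using t' by (cases g; cases g') auto
  moreover have "arcs col l k True = arcs col l' k True" for col
    unfolding arcs_left_subtree[of col l k g r e] arcs_left_subtree[of col l' k g' r' e] l
    by (cases col) (simp_all only: Node.prems(4,5) t')
  with Node.IH(1)[of l' k True] Node.prems(1,2) l have "l = l'"
    unfolding t' by simp
  moreover have "arcs col r (k + arity l) False = arcs col r' (k + arity l') False" for col
    unfolding arcs_right_subtree[of col r k l g e] arcs_right_subtree[of col r' k l' g' e]
    by (cases col) (simp_all only: Node.prems(4,5) t' l)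
  with Node.IH(2)[of r' "k + arity l" False] Node.prems(1,2) l r have "r = r'"
    unfolding t' by simp
  ultimately show ?case
    using t' by simp
qed

lemma eval_eq_imp_fcong:
  assumes "eval t = eval t'"
  shows "fcong t t'"
proof -
  obtain u u' where u: "fcong t u" "normal u" and u': "fcong t' u'" "normal u'"
    using exists_normal_fcong by meson
  have "bnc_of_tree u = bnc_of_tree u'"
    using assms fcong_imp_eval_eq[OF u(1)] fcong_imp_eval_eq[OF u'(1)] by (simp add: eval_eq_bnc_of_tree)
  then have "u = u'"
    using normal_arcs_inj[OF u(2) u'(2), of 1 True] by (simp add: bnc_of_tree_def)
  then show ?thesis
    using u(1) u'(1) fcong.sym fcong.trans by metis
qed

theorem theorem3p12:
  shows "(\<forall>t. bnc_size (eval t) = arity t)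
    \<and> (\<forall>t i s. 1 \<le> i \<and> i \<le> arity t \<longrightarrow> eval (graft t i s) = bnc_comp (eval t) i (eval s))
    \<and> range eval = generated_O
    \<and> (\<forall>t t'. eval t = eval t' \<longleftrightarrow> fcong t t')"
  using bnc_size_eval eval_graft eval_in_generated_O generated_O_subset_range_eval
    eval_eq_imp_fcong fcong_imp_eval_eq by blast

end
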